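(* Let $k$ be odd, $n=4k$, $d=\frac{(3^{2k}+1)^2}{20}$, $a\in\mathrm{GF}(3^n)^*$, and $r$ a nonsquare in $\mathrm{GF}(3^4)$. Regard $$q_1(x)=\mathrm{Tr}_1^n\big(a x^{3^{2(k+1)}+1}-x^{3^{2k}+1}\big),\qquad q_2(x)=\mathrm{Tr}_1^n\big(a r x^{3^{2(k+1)}+1}-r^{d}x^{3^{2k}+1}\big)$$ as quadratic forms in $n$ variables over $\mathrm{GF}(3)$ (via coordinates with respect to a basis of $\mathrm{GF}(3^n)$ over $\mathrm{GF}(3)$). Then the rank of $q_1$ is one of $n$, $n-2$, $n-4$, and the rank of $q_2$ equals $n$.
   Context: $\mathrm{Tr}_1^n(x)=x+x^3+\cdots+x^{3^{n-1}}$ is the absolute trace from $\mathrm{GF}(3^n)$ to $\mathrm{GF}(3)$. Writing $x=\sum_{i=1}^n x_i\alpha_i$ for a fixed basis $\{\alpha_1,\dots,\alpha_n\}$ of $\mathrm{GF}(3^n)$ over $\mathrm{GF}(3)$, each $q_j$ becomes a quadratic form in $x_1,\dots,x_n$ with coefficients in $\mathrm{GF}(3)$; its rank is the minimal number of variables it depends on after an invertible linear change of variables, equivalently $n-\dim_{\mathrm{GF}(3)}\{y: q_j(x+y)=q_j(x)\ \forall x\}$. *)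

theory Defs
  imports Main
begin

text \<open>The finite field GF(3^n) is modelled as a finite field type 'a with
  CARD('a) = 3^n.  Its prime field GF(3) is the set of roots of x^3 = x,
  and GF(3^4) is the set of roots of x^(3^4) = x.\<close>

definition GF3 :: "'a::field set" where
  "GF3 = {x. x ^ 3 = x}"

definition GF81 :: "'a::field set" where
  "GF81 = {x. x ^ (3 ^ 4) = x}"

definition tr :: "nat \<Rightarrow> 'a::field \<Rightarrow> 'a" where
  "tr n x = (\<Sum>i<n. x ^ (3 ^ i))"

definition span3 :: "'a::field set \<Rightarrow> 'a set" where
  "span3 B = {\<Sum>b\<in>B. c b * b | c. \<forall>b\<in>B. c b \<in> GF3}"

definition dim3 :: "'a::field set \<Rightarrow> nat" where
  "dim3 V = (LEAST m. \<exists>B. finite B \<and> card B = m \<and> B \<subseteq> V \<and> V = span3 B)"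

definition qrad :: "('a::field \<Rightarrow> 'a) \<Rightarrow> 'a set" where
  "qrad q = {y. \<forall>x. q (x + y) = q x}"

definition qrank :: "nat \<Rightarrow> ('a::field \<Rightarrow> 'a) \<Rightarrow> nat" where
  "qrank n q = n - dim3 (qrad q)"

end

theory Submission
  imports Defs "HOL-Computational_Algebra.Polynomial" "HOL-Computational_Algebra.Primes"
    "HOL-Library.FuncSet"
begin

text \<open>
  Both forms have the shape Q(x) = Tr(A x^(3^M+1) + B x^(3^K+1)) with M = 2k+2,
  K = 2k.  In characteristic 3 such a form polarizes as Q(x+y) = Q(x) + Q(y) + Tr(x L(y)) with
  the linearized polynomial L(y) = (Ay)^(3^(n-M)) + A y^(3^M) + (By)^(3^(n-K)) + B y^(3^K);
  as the trace pairing is nondegenerate, every element of the radical of Q is a root of L.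
  The radical is a GF(3)-subspace, so it has 3^d elements where d is its dimension, and the rank
  is n - d.

  For q1, raising L(y) = 0 to the power 3^M gives a nonzero polynomial equation of degree 81,
  so d <= 4.  A square root i of -1 exists in GF(3^n) and q1(i x) = -q1(x), so the radical is
  closed under multiplication by i; its nonzero elements split into orbits {y, iy, -y, -iy},
  hence 4 divides 3^d - 1 and d is even.  For q2, a nonsquare r of GF(81) satisfies r^40 = -1
  and r^d = r^5 for the exponent d of the statement; L(y) = 0 then collapses to
  (ay)^(81^j) + a y^(81^(j+1)) = 0 (where k = 2j+1), and raising this to the odd power
  (3^n - 1)/80 forces y = 0.
\<close>

text \<open>The characteristic of a finite ring divides its cardinality: summing all elements twice, once
  shifted by 1, shows card(UNIV) * 1 = 0.\<close>
lemma of_nat_card_eq_0: "of_nat (card (UNIV :: 'a set)) = (0 :: 'a::{comm_ring_1,finite})"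
proof -
  have "(\<Sum>x\<in>UNIV. x) = (\<Sum>x\<in>UNIV. x + (1::'a))"
    by (rule sum.reindex_bij_witness[where i="\<lambda>x. x + 1" and j="\<lambda>x. x - 1"]) auto
  also have "\<dots> = (\<Sum>x\<in>UNIV. x) + of_nat (card (UNIV :: 'a set))"
    by (simp add: sum.distrib)
  finally show ?thesis by simp
qed

lemma CHAR_eq_3:
  assumes "card (UNIV :: 'a::{field,finite} set) = 3 ^ n"
  shows "CHAR('a) = 3"
proof -
  have prime: "prime CHAR('a)"
    by (intro prime_CHAR_semidom finite_imp_CHAR_pos) simp
  have "CHAR('a) dvd 3 ^ n"
    using of_nat_card_eq_0[where 'a='a] of_nat_eq_0_iff_char_dvd[where 'a='a] assms by metis
  hence "CHAR('a) dvd 3"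
    using prime prime_dvd_power by blast
  thus ?thesis
    using prime primes_dvd_imp_eq[of "CHAR('a)" 3] by simp
qed

lemma three_eq_0: "CHAR('a::semiring_1) = 3 \<Longrightarrow> (3::'a) = 0"
  by (metis of_nat_CHAR of_nat_numeral)

lemma two_neq_0: "CHAR('a::semiring_1) = 3 \<Longrightarrow> (2::'a) \<noteq> 0"
  using of_nat_eq_0_iff_char_dvd[of 2, where ?'a='a] by simp

lemma frobenius_add:
  "CHAR('a::comm_semiring_1) = 3 \<Longrightarrow> (x + y) ^ (3 ^ j) = x ^ (3 ^ j) + (y::'a) ^ (3 ^ j)"
  by (intro freshmans_dream') simp_all

lemma power_mod_order:
  assumes "(x::'a::monoid_mult) ^ m = 1"
  shows "x ^ p = x ^ (p mod m)"
proof -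
  have "x ^ p = x ^ (m * (p div m) + p mod m)"
    by simp
  also have "\<dots> = (x ^ m) ^ (p div m) * x ^ (p mod m)"
    by (simp only: power_add power_mult)
  finally show ?thesis using assms by simp
qed

lemma card_field_ge_2: "2 \<le> card (UNIV :: 'a::{field,finite} set)"
proof -
  have "card {0::'a, 1} \<le> card (UNIV :: 'a set)" by (rule card_mono) simp_all
  thus ?thesis by simp
qed

lemma finite_field_unit_power:
  assumes "(x::'a::{field,finite}) \<noteq> 0"
  shows "x ^ (card (UNIV :: 'a set) - 1) = 1"
proof -
  let ?U = "UNIV - {0::'a}"
  have "(\<Prod>y\<in>?U. x * y) = (\<Prod>y\<in>?U. y)"
    by (rule prod.reindex_bij_witness[where i="\<lambda>y. y / x" and j="\<lambda>y. x * y"]) (use assms in auto)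
  moreover have "(\<Prod>y\<in>?U. x * y) = x ^ card ?U * (\<Prod>y\<in>?U. y)"
    by (simp add: prod.distrib)
  moreover have "(\<Prod>y\<in>?U. y) \<noteq> 0" by simp
  moreover have "card ?U = card (UNIV :: 'a set) - 1" by (simp add: card_Diff_singleton)
  ultimately show ?thesis by simp
qed

lemma finite_field_power_card:
  "(x::'a::{field,finite}) ^ card (UNIV :: 'a set) = x"
proof (cases "x = 0")
  case True
  then show ?thesis using card_gt_0_iff[of "UNIV :: 'a set"] by simp
next
  case False
  have "card (UNIV :: 'a set) = Suc (card (UNIV :: 'a set) - 1)"
    using card_gt_0_iff[of "UNIV :: 'a set"] by simp
  then have "x ^ card (UNIV :: 'a set) = x * x ^ (card (UNIV :: 'a set) - 1)"
    by (metis power_Suc)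
  then show ?thesis using finite_field_unit_power[OF False] by simp
qed

lemma gf3_iff:
  assumes "CHAR('a::field) = 3"
  shows "(c::'a) \<in> GF3 \<longleftrightarrow> c = 0 \<or> c = 1 \<or> c = -1"
proof -
  have "c ^ 3 - c = c * ((c - 1) * (c + 1))" by (simp add: algebra_simps power3_eq_cube)
  hence "c ^ 3 = c \<longleftrightarrow> c * ((c - 1) * (c + 1)) = 0" by (metis eq_iff_diff_eq_0)
  also have "\<dots> \<longleftrightarrow> c = 0 \<or> c = 1 \<or> c = -1" by (auto simp: eq_neg_iff_add_eq_0 add.commute)
  finally show ?thesis unfolding GF3_def by simp
qed

lemma card_GF3:
  assumes "CHAR('a::field) = 3"
  shows "card (GF3 :: 'a set) = 3"
proof -
  have "(1::'a) \<noteq> -1"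
  proof
    assume "(1::'a) = -1"
    hence "(2::'a) = 0" by (simp add: eq_neg_iff_add_eq_0)
    thus False using two_neq_0[OF assms] by simp
  qed
  hence "card {0::'a, 1, -1} = 3" by simp
  moreover have "(GF3 :: 'a set) = {0, 1, -1}" using gf3_iff[OF assms] by blast
  ultimately show ?thesis by simp
qed

lemma gf3_mult: "b \<in> GF3 \<Longrightarrow> c \<in> GF3 \<Longrightarrow> b * c \<in> (GF3 :: 'a::field set)"
  unfolding GF3_def by (simp add: power_mult_distrib)

lemma gf3_uminus: "c \<in> GF3 \<Longrightarrow> - c \<in> (GF3 :: 'a::field set)"
  unfolding GF3_def by simp

lemma gf3_add: "CHAR('a::field) = 3 \<Longrightarrow> b \<in> GF3 \<Longrightarrow> c \<in> GF3 \<Longrightarrow> b + c \<in> (GF3 :: 'a set)"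
  unfolding GF3_def using frobenius_add[of b c 1] by simp

lemma gf3_square: "c \<in> GF3 \<Longrightarrow> c \<noteq> 0 \<Longrightarrow> c * c = (1::'a::field)"
  unfolding GF3_def by (simp add: power3_eq_cube)

definition subspace3 :: "'a::field set \<Rightarrow> bool" where
  "subspace3 S \<longleftrightarrow> 0 \<in> S \<and> (\<forall>x\<in>S. \<forall>y\<in>S. x + y \<in> S) \<and> (\<forall>c\<in>GF3. \<forall>x\<in>S. c * x \<in> S)"

lemma subspace3_sum:
  assumes "subspace3 S" and "\<And>b. b \<in> B \<Longrightarrow> f b \<in> S"
  shows "sum f B \<in> S"
  using assms(2)
  by (induction B rule: infinite_finite_induct) (use assms(1) in \<open>auto simp: subspace3_def\<close>)

lemma subspace3_span3:
  assumes "CHAR('a::field) = 3"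
  shows "subspace3 (span3 (B :: 'a set))"
  unfolding subspace3_def
proof (intro conjI ballI)
  show "0 \<in> span3 B"
    unfolding span3_def GF3_def by (intro CollectI exI[of _ "\<lambda>_. 0"]) simp
next
  fix x y assume "x \<in> span3 B" "y \<in> span3 B"
  then obtain c d where "x = (\<Sum>b\<in>B. c b * b)" "\<forall>b\<in>B. c b \<in> GF3"
    and "y = (\<Sum>b\<in>B. d b * b)" "\<forall>b\<in>B. d b \<in> GF3"
    unfolding span3_def by blast
  then show "x + y \<in> span3 B"
    unfolding span3_def using gf3_add[OF assms]
    by (intro CollectI exI[of _ "\<lambda>b. c b + d b"]) (simp add: sum.distrib distrib_right)
next
  fix c x :: 'a assume "c \<in> GF3" "x \<in> span3 B"
  then obtain d where "x = (\<Sum>b\<in>B. d b * b)" "\<forall>b\<in>B. d b \<in> GF3"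
    unfolding span3_def by blast
  then show "c * x \<in> span3 B"
    unfolding span3_def using \<open>c \<in> GF3\<close> gf3_mult
    by (intro CollectI exI[of _ "\<lambda>b. c * d b"]) (auto simp: sum_distrib_left mult.assoc)
qed

lemma span3_superset:
  assumes "finite B"
  shows "B \<subseteq> span3 (B :: 'a::field set)"
proof
  fix y assume y: "y \<in> B"
  have "(\<Sum>b\<in>B. (if b = y then 1 else 0) * b) = (\<Sum>b\<in>B. if b = y then b else 0)"
    by (intro sum.cong) auto
  also have "\<dots> = y" using assms y by simp
  finally have "(\<Sum>b\<in>B. (if b = y then 1 else 0) * b) = y" .
  moreover have "(if b = y then 1 else 0) \<in> (GF3 :: 'a set)" for b
    unfolding GF3_def by simp
  ultimately show "y \<in> span3 B"
    unfolding span3_def by (intro CollectI exI[of _ "\<lambda>b. if b = y then 1 else 0"]) auto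
qed

lemma span3_least:
  assumes "subspace3 S" and "B \<subseteq> S"
  shows "span3 B \<subseteq> S"
proof
  fix y assume "y \<in> span3 B"
  then obtain c where "y = (\<Sum>b\<in>B. c b * b)" "\<forall>b\<in>B. c b \<in> GF3"
    unfolding span3_def by blast
  then show "y \<in> S"
    using assms by (auto intro!: subspace3_sum simp: subspace3_def)
qed

lemma span3_mono:
  assumes "CHAR('a::field) = 3" and "finite C" and "B \<subseteq> C"
  shows "span3 B \<subseteq> span3 (C :: 'a set)"
  using assms span3_superset[OF assms(2)] by (intro span3_least subspace3_span3) auto

lemma span3_remove_dependent:
  assumes char: "CHAR('a::field) = 3" and fin: "finite B" and b0: "b0 \<in> B"
    and rel: "(\<Sum>b\<in>B. e b * b) = (0::'a)" and coeffs: "\<forall>b\<in>B. e b \<in> GF3" and nz: "e b0 \<noteq> 0"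
  shows "span3 (B - {b0}) = span3 B"
proof
  let ?B1 = "B - {b0}"
  have "e b0 * b0 = - (\<Sum>b\<in>?B1. e b * b)"
    using rel fin b0 by (simp add: sum.remove eq_neg_iff_add_eq_0)
  hence "e b0 * (e b0 * b0) = (\<Sum>b\<in>?B1. (- (e b0 * e b)) * b)"
    by (simp add: sum_distrib_left sum_negf mult.assoc)
  moreover have "e b0 * (e b0 * b0) = b0"
    using gf3_square[OF coeffs[rule_format, OF b0] nz] by (simp flip: mult.assoc)
  ultimately have combination: "b0 = (\<Sum>b\<in>?B1. (- (e b0 * e b)) * b)"
    by metis
  have "\<forall>b\<in>?B1. - (e b0 * e b) \<in> GF3"
    using coeffs b0 by (blast intro: gf3_uminus gf3_mult)
  hence "b0 \<in> span3 ?B1"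
    unfolding span3_def by (intro CollectI exI[of _ "\<lambda>b. - (e b0 * e b)"] conjI combination)
  hence "B \<subseteq> span3 ?B1"
    using span3_superset[of ?B1] fin by auto
  thus "span3 B \<subseteq> span3 ?B1"
    by (rule span3_least[OF subspace3_span3[OF char]])
  show "span3 ?B1 \<subseteq> span3 B"
    using span3_mono[OF char fin] by blast
qed

lemma span3_coordinates_inj:
  assumes char: "CHAR('a::field) = 3" and fin: "finite B"
    and irredundant: "\<And>b. b \<in> B \<Longrightarrow> span3 (B - {b}) \<noteq> span3 B"
  shows "inj_on (\<lambda>c. \<Sum>b\<in>B. c b * (b::'a)) (B \<rightarrow>\<^sub>E GF3)"
proof (rule inj_onI, rule ccontr)
  fix c c' assume c: "c \<in> B \<rightarrow>\<^sub>E GF3" and c': "c' \<in> B \<rightarrow>\<^sub>E GF3"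
    and eq: "(\<Sum>b\<in>B. c b * b) = (\<Sum>b\<in>B. c' b * b)" and ne: "c \<noteq> c'"
  obtain b0 where b0: "b0 \<in> B" "c b0 \<noteq> c' b0"
    using c c' ne by (meson PiE_ext)
  have "(\<Sum>b\<in>B. (c b - c' b) * b) = (\<Sum>b\<in>B. c b * b) - (\<Sum>b\<in>B. c' b * b)"
    by (simp add: left_diff_distrib sum_subtractf)
  hence "(\<Sum>b\<in>B. (c b - c' b) * b) = 0"
    by (simp only: eq diff_self)
  moreover have "\<forall>b\<in>B. c b - c' b \<in> GF3"
  proof
    fix b assume "b \<in> B"
    hence "c b \<in> GF3" "- c' b \<in> GF3"
      using c c' gf3_uminus by (auto simp: PiE_iff)
    thus "c b - c' b \<in> GF3"
      using gf3_add[OF char] by (simp only: diff_conv_add_uminus)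
  qed
  moreover have "c b0 - c' b0 \<noteq> 0"
    using b0(2) by simp
  ultimately have "span3 (B - {b0}) = span3 B"
    by (rule span3_remove_dependent[OF char fin b0(1)])
  thus False using irredundant b0(1) by blast
qed

lemma card_span3:
  assumes char: "CHAR('a::field) = 3" and fin: "finite B"
    and irredundant: "\<And>b. b \<in> B \<Longrightarrow> span3 (B - {b}) \<noteq> span3 B"
  shows "card (span3 (B :: 'a set)) = 3 ^ card B"
proof -
  let ?coord = "\<lambda>c. \<Sum>b\<in>B. c b * b"
  have "span3 B = ?coord ` (B \<rightarrow>\<^sub>E GF3)"
  proof
    show "?coord ` (B \<rightarrow>\<^sub>E GF3) \<subseteq> span3 B" unfolding span3_def by auto
    show "span3 B \<subseteq> ?coord ` (B \<rightarrow>\<^sub>E GF3)"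
    proof
      fix y assume "y \<in> span3 B"
      then obtain c where "y = ?coord c" "\<forall>b\<in>B. c b \<in> GF3" unfolding span3_def by blast
      hence "y = ?coord (restrict c B)" "restrict c B \<in> B \<rightarrow>\<^sub>E GF3" by auto
      thus "y \<in> ?coord ` (B \<rightarrow>\<^sub>E GF3)" by blast
    qed
  qed
  hence "card (span3 B) = card (B \<rightarrow>\<^sub>E (GF3 :: 'a set))"
    using span3_coordinates_inj[OF assms] by (simp add: card_image)
  also have "\<dots> = 3 ^ card B"
    using fin by (simp add: card_PiE card_GF3[OF char])
  finally show ?thesis .
qed

text \<open>A subspace R of a finite field of characteristic 3 has 3^(dim3 R) elements: a spanning set of
  minimal size is irredundant.\<close>
lemma card_subspace3:
  assumes char: "CHAR('a::{field,finite}) = 3" and R: "subspace3 (R :: 'a set)"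
  shows "card R = 3 ^ dim3 R"
proof -
  define spans where "spans m \<longleftrightarrow> (\<exists>B. finite B \<and> card B = m \<and> B \<subseteq> R \<and> R = span3 B)" for m
  have "R = span3 R"
    by (rule antisym[OF span3_superset span3_least[OF R]]) simp_all
  hence "spans (card R)" unfolding spans_def by (intro exI[of _ R]) simp
  moreover have dim: "dim3 R = (LEAST m. spans m)" unfolding dim3_def spans_def ..
  ultimately have "spans (dim3 R)" by (metis LeastI)
  then obtain B where B: "card B = dim3 R" "B \<subseteq> R" "R = span3 B"
    unfolding spans_def by blast
  have "span3 (B - {b}) \<noteq> span3 B" if "b \<in> B" for b
  proof
    assume "span3 (B - {b}) = span3 B"
    hence "spans (card (B - {b}))" unfolding spans_def using B(2,3) by (intro exI[of _ "B - {b}"]) auto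
    hence "dim3 R \<le> card (B - {b})" unfolding dim by (rule Least_le)
    moreover have "card (B - {b}) < card B" by (rule card_Diff1_less[OF finite that])
    ultimately show False using B(1) by simp
  qed
  with card_span3[OF char, of B] show ?thesis using B(1,3) by simp
qed

lemma dim3_zero: "dim3 {0::'a::field} = 0"
  unfolding dim3_def by (rule Least_eq_0) (auto intro!: exI[of _ "{}"] simp: span3_def)

lemma tr_cube:
  assumes "(w::'a::field) ^ (3 ^ n) = w"
  shows "tr n (w ^ 3) = tr n w"
proof -
  have "tr n (w ^ 3) = (\<Sum>i<n. w ^ (3 ^ Suc i))"
    unfolding tr_def by (intro sum.cong refl) (simp add: power_mult[symmetric] mult.commute)
  also have "\<dots> = (\<Sum>i<Suc n. w ^ (3 ^ i)) - w"
    by (subst sum.lessThan_Suc_shift) simp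
  also have "\<dots> = tr n w"
    unfolding tr_def using assms by simp
  finally show ?thesis .
qed

lemma tr_frobenius:
  assumes "(w::'a::field) ^ (3 ^ n) = w"
  shows "tr n (w ^ (3 ^ j)) = tr n w"
proof (induction j)
  case (Suc j)
  have "(w ^ (3 ^ j)) ^ (3 ^ n) = w ^ (3 ^ j)"
    using assms by (metis power_mult mult.commute)
  hence "tr n ((w ^ (3 ^ j)) ^ 3) = tr n w"
    using tr_cube Suc.IH by metis
  thus ?case by (simp add: power_mult[symmetric] mult.commute)
qed simp

lemma tr_add: "CHAR('a::field) = 3 \<Longrightarrow> tr n (u + v) = tr n u + tr n (v::'a)"
  unfolding tr_def by (simp add: frobenius_add sum.distrib)

lemma tr_uminus: "tr n (- (u::'a::field)) = - tr n u"
  unfolding tr_def by (simp add: power_minus_odd sum_negf)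

text \<open>The trace is not identically zero on GF(3^n): otherwise all 3^n elements would be roots of a
  nonzero polynomial of degree 3^(n-1).\<close>
lemma tr_nonzero:
  assumes card: "card (UNIV :: 'a::{field,finite} set) = 3 ^ n"
  shows "\<exists>z::'a. tr n z \<noteq> 0"
proof (rule ccontr)
  assume "\<not> ?thesis"
  hence roots: "{z. poly (\<Sum>i<n. monom (1::'a) (3 ^ i)) z = 0} = UNIV"
    unfolding tr_def by (simp add: poly_sum poly_monom)
  have n: "n > 0"
    using card card_field_ge_2[where 'a='a] by (cases n) auto
  let ?p = "\<Sum>i<n. monom (1::'a) (3 ^ i)"
  have "coeff ?p 1 = (\<Sum>i<n. if i = 0 then 1 else 0)"
    by (simp add: coeff_sum coeff_monom)
  hence "?p \<noteq> 0" using n by auto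
  moreover have "degree ?p \<le> 3 ^ (n - 1)"
    by (intro degree_sum_le) (auto simp: degree_monom_eq intro!: power_increasing)
  ultimately have "card (UNIV :: 'a set) \<le> 3 ^ (n - 1)"
    using card_poly_roots_bound[of ?p] roots by simp
  moreover have "(3::nat) ^ (n - 1) < 3 ^ n" using n by (intro power_strict_increasing) auto
  ultimately show False using card by linarith
qed

text \<open>The binomial quadratic forms Tr(A x^(3^M+1) + B x^(3^K+1)) of the statement, and the
  linearized polynomial of their polar form.\<close>
definition bquad :: "nat \<Rightarrow> 'a::field \<Rightarrow> nat \<Rightarrow> 'a \<Rightarrow> nat \<Rightarrow> 'a \<Rightarrow> 'a" where
  "bquad n A M B K x = tr n (A * x ^ (3 ^ M + 1) + B * x ^ (3 ^ K + 1))"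

definition bquad_lin :: "nat \<Rightarrow> 'a::field \<Rightarrow> nat \<Rightarrow> 'a \<Rightarrow> nat \<Rightarrow> 'a \<Rightarrow> 'a" where
  "bquad_lin n A M B K y =
     (A * y) ^ (3 ^ (n - M)) + A * y ^ (3 ^ M) + (B * y) ^ (3 ^ (n - K)) + B * y ^ (3 ^ K)"

lemma tr_move_frobenius:
  fixes A x y :: "'a::field"
  assumes F: "\<And>w::'a. w ^ (3 ^ n) = w" and M: "M \<le> n"
  shows "tr n (A * x ^ (3 ^ M) * y) = tr n (x * (A * y) ^ (3 ^ (n - M)))"
proof -
  have "tr n (A * x ^ (3 ^ M) * y) = tr n ((A * x ^ (3 ^ M) * y) ^ (3 ^ (n - M)))"
    by (rule tr_frobenius[OF F, symmetric])
  also have "(A * x ^ (3 ^ M) * y) ^ (3 ^ (n - M)) = (A * y) ^ (3 ^ (n - M)) * x ^ (3 ^ M * 3 ^ (n - M))"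
    by (simp add: power_mult_distrib power_mult algebra_simps)
  also have "(3::nat) ^ M * 3 ^ (n - M) = 3 ^ n"
    using M by (simp flip: power_add)
  finally show ?thesis by (simp add: F mult.commute)
qed

lemma bquad_polarization:
  fixes A B x y :: "'a::field"
  assumes char: "CHAR('a) = 3" and F: "\<And>w::'a. w ^ (3 ^ n) = w" and M: "M \<le> n" and K: "K \<le> n"
  shows "bquad n A M B K (x + y) = bquad n A M B K x + bquad n A M B K y + tr n (x * bquad_lin n A M B K y)"
proof -
  have expand: "(x + y) ^ (3 ^ J + 1) = x ^ (3 ^ J + 1) + y ^ (3 ^ J + 1) + x ^ (3 ^ J) * y + y ^ (3 ^ J) * x"
    for J by (simp add: frobenius_add[OF char] algebra_simps)
  have "bquad n A M B K (x + y) = bquad n A M B K x + bquad n A M B K y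
      + tr n (A * x ^ (3 ^ M) * y) + tr n (x * (A * y ^ (3 ^ M)))
      + tr n (B * x ^ (3 ^ K) * y) + tr n (x * (B * y ^ (3 ^ K)))"
    unfolding bquad_def expand by (simp add: tr_add[OF char] algebra_simps)
  also have "\<dots> = bquad n A M B K x + bquad n A M B K y + tr n (x * bquad_lin n A M B K y)"
    unfolding bquad_lin_def tr_move_frobenius[OF F M] tr_move_frobenius[OF F K]
    by (simp add: tr_add[OF char] algebra_simps)
  finally show ?thesis .
qed

text \<open>Elements of the radical are roots of the linearized polynomial, since the trace pairing is
  nondegenerate.\<close>
lemma qrad_bquad_lin:
  fixes A B :: "'a::{field,finite}"
  assumes card: "card (UNIV :: 'a set) = 3 ^ n" and M: "M \<le> n" and K: "K \<le> n"
    and y: "y \<in> qrad (bquad n A M B K)"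
  shows "bquad_lin n A M B K y = 0"
proof (rule ccontr)
  assume nz: "bquad_lin n A M B K y \<noteq> 0"
  have char: "CHAR('a) = 3" by (rule CHAR_eq_3[OF card])
  have F: "\<And>w::'a. w ^ (3 ^ n) = w" using finite_field_power_card card by metis
  let ?Q = "bquad n A M B K"
  have shift: "?Q (x + y) = ?Q x" for x using y unfolding qrad_def by blast
  have "?Q y = 0" using shift[of 0] by (simp add: bquad_def tr_def zero_power)
  hence pairing: "tr n (x * bquad_lin n A M B K y) = 0" for x
    using bquad_polarization[OF char F M K, of A B x y] shift[of x] by simp
  obtain z :: 'a where z: "tr n z \<noteq> 0" using tr_nonzero[OF card] by blast
  have "z / bquad_lin n A M B K y * bquad_lin n A M B K y = z"
    using nz by simp
  thus False using pairing[of "z / bquad_lin n A M B K y"] z by simp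
qed

lemma subspace3_qrad:
  assumes "CHAR('a::field) = 3"
  shows "subspace3 (qrad (q :: 'a \<Rightarrow> 'a))"
proof -
  have shift: "q (x + y) = q x" if "y \<in> qrad q" for x y
    using that unfolding qrad_def by blast
  have zero: "0 \<in> qrad q"
    unfolding qrad_def by simp
  have add: "y + z \<in> qrad q" if "y \<in> qrad q" "z \<in> qrad q" for y z
  proof -
    have "q (x + (y + z)) = q x" for x
      using shift[OF that(2), of "x + y"] shift[OF that(1), of x] by (simp add: add.assoc)
    thus ?thesis unfolding qrad_def by blast
  qed
  have neg: "- y \<in> qrad q" if "y \<in> qrad q" for y
  proof -
    have "q (x + - y) = q x" for x
      using shift[OF that, of "x - y"] by simp
    thus ?thesis unfolding qrad_def by blast
  qed
  have "c * y \<in> qrad q" if "c \<in> GF3" "y \<in> qrad q" for c y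
  proof -
    have "c = 0 \<or> c = 1 \<or> c = -1" using that(1) gf3_iff[OF assms] by blast
    thus ?thesis using zero that(2) neg[OF that(2)] by (elim disjE) simp_all
  qed
  thus ?thesis
    unfolding subspace3_def using zero add by blast
qed

lemma qrad_scale:
  assumes "\<And>x. q (c * x) = g (q x)" and "c \<noteq> 0" and "y \<in> qrad q"
  shows "c * y \<in> qrad (q :: 'a::field \<Rightarrow> 'a)"
  unfolding qrad_def
proof (intro CollectI allI)
  fix x
  have "q (x + c * y) = q (c * (x / c + y))" using assms(2) by (simp add: algebra_simps)
  also have "\<dots> = g (q (x / c))" using assms(1,3) unfolding qrad_def by simp
  also have "\<dots> = q x" using assms(1)[of "x / c"] assms(2) by simp
  finally show "q (x + c * y) = q x" .
qed

text \<open>For i with i^2 = -1 (so i lies in GF(9)) and even exponents 2M, 2K, the form is odd under x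
  |-> i x.\<close>
lemma bquad_scale_sqrt_minus_one:
  assumes ii: "i * i = (-1::'a::field)"
  shows "bquad n A (2 * M) B (2 * K) (i * x) = - bquad n A (2 * M) B (2 * K) x"
proof -
  have "i ^ 9 = i * (i * i) ^ 4" by (simp add: power_mult_distrib flip: power_add power_Suc)
  hence "i ^ 9 = i" using ii by simp
  hence i_fixed: "i ^ (9 ^ m) = i" for m
    by (induction m) (simp_all add: power_mult)
  have "(i * x) ^ (3 ^ (2 * m) + 1) = - (x ^ (3 ^ (2 * m) + 1))" for m
  proof -
    have "(i * x) ^ (9 ^ m + 1) = (i ^ (9 ^ m) * i) * x ^ (9 ^ m + 1)"
      by (simp add: power_mult_distrib)
    also have "i ^ (9 ^ m) * i = -1" using i_fixed ii by simp
    finally show ?thesis by (simp add: power_mult)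
  qed
  thus ?thesis unfolding bquad_def by (simp flip: tr_uminus)
qed

lemma card_power_eq_le:
  assumes "m > 0"
  shows "card {x::'a::field. x ^ m = c} \<le> m"
proof -
  define p where "p = monom (1::'a) m - [:c:]"
  have "coeff p m = 1" unfolding p_def using assms by (cases m) (simp_all add: coeff_monom)
  hence "p \<noteq> 0" by auto
  moreover have "degree p \<le> m"
    unfolding p_def by (rule order.trans[OF degree_diff_le_max]) (simp add: degree_monom_eq)
  moreover have "{x. poly p x = 0} = {x. x ^ m = c}"
    unfolding p_def by (simp add: poly_monom)
  ultimately show ?thesis
    using card_poly_roots_bound[of p] by simp
qed

lemma card_le_power_fibres:
  fixes A :: "'a::{field,finite} set"
  assumes "m > 0" and "A \<subseteq> (\<Union>z\<in>C. {x. x ^ m = z})"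
  shows "card A \<le> card C * m"
proof -
  have "card A \<le> card (\<Union>z\<in>C. {x::'a. x ^ m = z})"
    by (intro card_mono assms) simp
  also have "\<dots> \<le> (\<Sum>z\<in>C. card {x::'a. x ^ m = z})"
    by (rule card_UN_le) simp
  also have "\<dots> \<le> (\<Sum>z\<in>C. m)"
    by (intro sum_mono card_power_eq_le assms)
  finally show ?thesis by simp
qed

text \<open>If m divides |F| - 1 then x^m = 1 has at least m solutions: the e-th powers of the nonzero
  elements (e = (|F|-1)/m) are such roots, and every fibre has at most e elements.\<close>
lemma card_roots_of_unity_ge:
  assumes q: "card (UNIV :: 'a::{field,finite} set) - 1 = m * e"
  shows "m \<le> card {x::'a. x ^ m = 1}"
proof -
  let ?P = "(\<lambda>x. x ^ e) ` (UNIV - {0::'a})"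
  have "m * e > 0" using q card_field_ge_2[where 'a='a] by linarith
  hence e: "e > 0" by simp
  have "UNIV - {0::'a} \<subseteq> (\<Union>z\<in>?P. {x. x ^ e = z})" by auto
  hence "card (UNIV - {0::'a}) \<le> card ?P * e"
    by (rule card_le_power_fibres[OF e])
  hence "m \<le> card ?P"
    using q e by (simp add: card_Diff_singleton)
  also have "?P \<subseteq> {x::'a. x ^ m = 1}"
  proof
    fix z assume "z \<in> ?P"
    then obtain x :: 'a where "x \<noteq> 0" "z = x ^ e" by blast
    thus "z \<in> {x. x ^ m = 1}"
      using finite_field_unit_power[of x] q by (simp add: mult.commute flip: power_mult)
  qed
  hence "card ?P \<le> card {x::'a. x ^ m = 1}" by (intro card_mono) simp_all
  finally show ?thesis .
qed

lemma sqrt_minus_one_exists: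
  assumes "card (UNIV :: 'a::{field,finite} set) - 1 = 4 * e"
  shows "\<exists>i::'a. i * i = -1"
proof -
  have "card {x::'a. x ^ 2 = 1} < card {x::'a. x ^ 4 = 1}"
    using card_power_eq_le[of 2 "1::'a"] card_roots_of_unity_ge[OF assms] by simp
  hence "\<not> {x::'a. x ^ 4 = 1} \<subseteq> {x. x ^ 2 = 1}"
    using card_mono[OF finite, of "{x::'a. x ^ 4 = 1}" "{x. x ^ 2 = 1}"] by linarith
  then obtain x :: 'a where x4: "x ^ 4 = 1" and x2: "x ^ 2 \<noteq> 1"
    by blast
  have "(x ^ 2 - 1) * (x * x + 1) = x ^ 4 - 1"
    by (simp add: algebra_simps flip: power_add power2_eq_square)
  hence "x * x + 1 = 0" using x4 x2 by simp
  hence "x * x = -1" by (simp add: eq_neg_iff_add_eq_0)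
  thus ?thesis by blast
qed

lemma geometric_81: "80 * (\<Sum>i<k. (81::nat) ^ i) + 1 = 81 ^ k"
  by (induction k) (simp_all add: algebra_simps)

lemma odd_geometric_81: "odd (\<Sum>i<k. (81::nat) ^ i) \<longleftrightarrow> odd k"
  by (induction k) simp_all

lemma card_minus_one_eq:
  assumes "card (UNIV :: 'a set) = 3 ^ (4 * k)"
  shows "card (UNIV :: 'a set) - 1 = 80 * (\<Sum>i<k. 81 ^ i)"
  using assms geometric_81[of k] by (simp add: power_mult)

lemma exponent_mod_80:
  assumes "odd k"
  shows "((3::nat) ^ (2 * k) + 1) ^ 2 div 20 mod 80 = 5"
proof -
  obtain j where k: "k = 2 * j + 1" using assms oddE by blast
  define v where "v = (\<Sum>i<j. (81::nat) ^ i)"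
  have v: "(81::nat) ^ j = 80 * v + 1"
    using geometric_81[of j] unfolding v_def by simp
  have "(3::nat) ^ (2 * k) = 9 * 81 ^ j"
    using k by (simp add: power_mult power_add)
  hence "((3::nat) ^ (2 * k) + 1) ^ 2 = 20 * (80 * (324 * v ^ 2 + 9 * v) + 5)"
    unfolding v by (simp add: power2_eq_square algebra_simps)
  then obtain w where "((3::nat) ^ (2 * k) + 1) ^ 2 = 20 * (80 * w + 5)" by blast
  thus ?thesis by simp
qed

lemma power_81_iterate: "(x::'a::monoid_mult) ^ 81 = x \<Longrightarrow> x ^ (81 ^ m) = x"
  by (induction m) (simp_all add: power_mult)

text \<open>Since 81^m is 1 modulo 80, raising to 81^m is invisible after raising to the power e =
  (|F|-1)/80.\<close>
lemma unit_power_81_e: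
  assumes q: "card (UNIV :: 'a::{field,finite} set) - 1 = 80 * e" and z: "(z::'a) \<noteq> 0"
  shows "(z ^ (81 ^ m)) ^ e = z ^ e"
proof -
  have order: "z ^ (e * 80) = 1"
    using finite_field_unit_power[OF z] q by (simp add: mult.commute)
  have "(81::nat) ^ m mod 80 = (81 mod 80) ^ m mod 80"
    by (rule power_mod[symmetric])
  hence mod81: "(81::nat) ^ m mod 80 = 1" by simp
  have "(z ^ (81 ^ m)) ^ e = z ^ (e * 81 ^ m)"
    by (simp add: mult.commute flip: power_mult)
  also have "\<dots> = z ^ (e * 81 ^ m mod (e * 80))"
    by (rule power_mod_order[OF order])
  also have "e * 81 ^ m mod (e * 80) = e"
    by (simp only: mod_mult_mult1 mod81 mult_1_right)
  finally show ?thesis .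
qed

text \<open>Euler's criterion in GF(81): a nonsquare r of GF(81) satisfies r^40 = -1. If r^40 = 1, the 80
  roots of x^80 = 1 (all in GF(81)) would square into the at most 39 elements of the set {z.
  z^40 = 1} other than r, which is impossible.\<close>
lemma nonsquare_power_40:
  fixes r :: "'a::{field,finite}"
  assumes card: "card (UNIV :: 'a set) = 3 ^ (4 * k)"
    and r: "r \<in> GF81" and r0: "r \<noteq> 0" and nonsquare: "\<not> (\<exists>y\<in>GF81. y ^ 2 = r)"
  shows "r ^ 40 = -1"
proof -
  have "r * r ^ 80 = r * 1" using r unfolding GF81_def by (simp flip: power_Suc)
  hence "r ^ 80 = 1" using r0 by simp
  moreover have "(r ^ 40 - 1) * (r ^ 40 + 1) = r ^ 80 - 1"
    by (simp add: algebra_simps flip: power_add)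
  ultimately have "r ^ 40 = 1 \<or> r ^ 40 = -1"
    by (auto simp: eq_neg_iff_add_eq_0)
  moreover have "r ^ 40 \<noteq> 1"
  proof
    assume r40: "r ^ 40 = 1"
    let ?T = "{z::'a. z ^ 40 = 1}"
    have "{x::'a. x ^ 80 = 1} \<subseteq> (\<Union>z\<in>?T - {r}. {y. y ^ 2 = z})"
    proof
      fix y :: 'a assume "y \<in> {x. x ^ 80 = 1}"
      hence y80: "y ^ 80 = 1" by simp
      hence "(y ^ 2) ^ 40 = 1" by (simp flip: power_mult)
      moreover have "y ^ 81 = y ^ 80 * y"
        using power_add[of y 80 1] by simp
      hence "y \<in> GF81" unfolding GF81_def using y80 by simp
      hence "y ^ 2 \<noteq> r" using nonsquare by blast
      ultimately show "y \<in> (\<Union>z\<in>?T - {r}. {y. y ^ 2 = z})" by blast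
    qed
    hence "card {x::'a. x ^ 80 = 1} \<le> card (?T - {r}) * 2"
      by (rule card_le_power_fibres[rotated]) simp
    also have "\<dots> \<le> 78"
      using card_power_eq_le[of 40 "1::'a"] r40 by (simp add: card_Diff_singleton)
    finally show False
      using card_roots_of_unity_ge[OF card_minus_one_eq[OF card]] by simp
  qed
  ultimately show ?thesis by blast
qed

text \<open>A set containing 0 and closed under multiplication by a square root i of -1 has card congruent
  to 1 modulo 4: its nonzero elements fall into orbits {y, iy, -y, -iy} of size 4.\<close>
lemma four_dvd_card_minus_one:
  fixes R :: "'a::{field,finite} set"
  assumes zero: "0 \<in> R" and closed: "\<And>y. y \<in> R \<Longrightarrow> i * y \<in> R"
    and ii: "i * i = -1" and two: "(2::'a) \<noteq> 0"
  shows "4 dvd card R - 1"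
proof -
  have iiy: "i * (i * y) = - y" for y using ii by (simp flip: mult.assoc)
  have neg: "- y \<in> R" if "y \<in> R" for y using closed[OF closed[OF that]] iiy by simp
  have i0: "i \<noteq> 0" using ii by auto
  have one_neq: "(1::'a) \<noteq> -1"
  proof
    assume "(1::'a) = -1"
    hence "(2::'a) = 0" by (simp add: eq_neg_iff_add_eq_0)
    thus False using two by simp
  qed
  have i1: "i \<noteq> 1" "i \<noteq> -1" using ii one_neq by auto
  have i_neg: "i \<noteq> -i" using i0 two by (auto simp: eq_neg_iff_add_eq_0 simp flip: mult_2)
  define U where "U = {1, i, -1, -i}"
  have card_U: "card U = 4"
    unfolding U_def using i1 i_neg one_neq by (auto simp: eq_neg_iff_add_eq_0 add.commute)
  define orbit where "orbit y = (\<lambda>u. u * y) ` U" for y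
  have orbit_eq: "orbit y = {y, i * y, - y, - (i * y)}" for y
    unfolding orbit_def U_def by auto
  have card_orbit: "card (orbit y) = 4" if "y \<noteq> 0" for y
  proof -
    have "inj_on (\<lambda>u. u * y) U" using that by (auto intro!: inj_onI)
    thus ?thesis unfolding orbit_def using card_U by (simp add: card_image)
  qed
  have orbit_same: "orbit z = orbit y" if "z \<in> orbit y" for z y
    using that iiy unfolding orbit_eq by (auto simp: mult.assoc)
  let ?C = "orbit ` (R - {0})"
  have "\<Union>?C = R - {0}"
  proof
    show "\<Union>?C \<subseteq> R - {0}" unfolding orbit_eq using closed neg i0 by auto
    show "R - {0} \<subseteq> \<Union>?C" unfolding orbit_eq by auto
  qed
  moreover have "card (\<Union>?C) = 4 * card ?C"
  proof (rule card_partition[symmetric])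
    show "card c = 4" if "c \<in> ?C" for c using card_orbit that by auto
    show "c1 \<inter> c2 = {}" if "c1 \<in> ?C" "c2 \<in> ?C" "c1 \<noteq> c2" for c1 c2
      using that orbit_same by blast
  qed simp_all
  ultimately have "4 * card ?C = card R - 1"
    using zero by (simp add: card_Diff_singleton)
  thus ?thesis by (metis dvd_triv_left)
qed

lemma even_if_four_dvd_power_3:
  assumes "4 dvd (3::nat) ^ d - 1"
  shows "even d"
proof (rule ccontr)
  assume "odd d"
  then obtain m where "d = 2 * m + 1" using oddE by blast
  hence "(3::nat) ^ d mod 4 = 3 * 9 ^ m mod 4" by (simp add: power_add power_mult)
  also have "\<dots> = 3 * (9 ^ m mod 4) mod 4"
    by (rule mod_mult_right_eq[symmetric])
  also have "(9::nat) ^ m mod 4 = (9 mod 4) ^ m mod 4"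
    by (rule power_mod[symmetric])
  finally have "(3::nat) ^ d mod 4 = 3" by simp
  moreover have "\<forall>x::nat. x mod 4 = 3 \<longrightarrow> \<not> 4 dvd x - 1" by presburger
  ultimately show False using assms by blast
qed

text \<open>For q1 (A = a, B = -1) the radical consists of roots of a^(3^M) y^81 + y^9 + a y, obtained by
  raising L(y) = 0 to the power 3^M.\<close>
lemma part1_radical_root:
  fixes a :: "'a::{field,finite}"
  assumes card: "card (UNIV :: 'a set) = 3 ^ n" and n: "n = 4 * k" and k: "k > 0"
    and y: "y \<in> qrad (bquad n a (2 * (k + 1)) (-1) (2 * k))"
  shows "a ^ (3 ^ (2 * (k + 1))) * y ^ 81 + y ^ 9 + a * y = 0"
proof -
  let ?M = "2 * (k + 1)" and ?K = "2 * k"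
  have char: "CHAR('a) = 3" by (rule CHAR_eq_3[OF card])
  have F: "w ^ (3 ^ n) = w" for w :: 'a using finite_field_power_card card by metis
  have high: "w ^ (3 ^ (n + j)) = w ^ (3 ^ j)" for w :: 'a and j
    by (simp add: power_add power_mult F)
  have "bquad_lin n a ?M (-1) ?K y = 0"
    by (rule qrad_bquad_lin[OF card _ _ y]) (use n k in simp_all)
  moreover have "n - ?M = 2 * k - 2" "n - ?K = ?K" using n by simp_all
  moreover have "- u - u = u" for u :: 'a
  proof -
    have "- u - u = u - 3 * u" by (simp add: algebra_simps)
    thus ?thesis by (simp add: three_eq_0[OF char])
  qed
  ultimately have lin: "(a * y) ^ (3 ^ (2 * k - 2)) + a * y ^ (3 ^ ?M) + y ^ (3 ^ ?K) = 0"
    unfolding bquad_lin_def by (simp add: power_minus_odd)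
  have exps: "2 * k - 2 + ?M = n + 0" "?M + ?M = n + 4" "?K + ?M = n + 2"
    using n k by simp_all
  have "0 = ((a * y) ^ (3 ^ (2 * k - 2)) + a * y ^ (3 ^ ?M) + y ^ (3 ^ ?K)) ^ (3 ^ ?M)"
    using lin by simp
  also have "\<dots> = (a * y) ^ (3 ^ (2 * k - 2) * 3 ^ ?M) + a ^ (3 ^ ?M) * y ^ (3 ^ ?M * 3 ^ ?M)
      + y ^ (3 ^ ?K * 3 ^ ?M)"
    by (simp only: frobenius_add[OF char] power_mult_distrib flip: power_mult)
  also have "\<dots> = (a * y) ^ (3 ^ (n + 0)) + a ^ (3 ^ ?M) * y ^ (3 ^ (n + 4)) + y ^ (3 ^ (n + 2))"
    by (simp only: exps flip: power_add)
  also have "\<dots> = a * y + a ^ (3 ^ ?M) * y ^ 81 + y ^ 9"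
    unfolding high by simp
  finally show ?thesis by (simp add: algebra_simps)
qed

lemma card_qrad_part1_le:
  fixes a :: "'a::{field,finite}"
  assumes card: "card (UNIV :: 'a set) = 3 ^ n" and n: "n = 4 * k" and k: "k > 0" and a: "a \<noteq> 0"
  shows "card (qrad (bquad n a (2 * (k + 1)) (-1) (2 * k))) \<le> 81"
proof -
  define p where "p = monom (a ^ (3 ^ (2 * (k + 1)))) 81 + monom 1 9 + monom a 1"
  have "coeff p 1 = a" unfolding p_def by (simp add: coeff_monom)
  hence "p \<noteq> 0" using a by auto
  moreover have "degree p \<le> 81" unfolding p_def
    by (intro degree_add_le) (simp_all add: degree_monom_le order.trans[OF degree_monom_le])
  ultimately have "card {y. poly p y = 0} \<le> 81"
    using card_poly_roots_bound[of p] by simp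
  moreover have "qrad (bquad n a (2 * (k + 1)) (-1) (2 * k)) \<subseteq> {y. poly p y = 0}"
    using part1_radical_root[OF card n k] unfolding p_def by (auto simp: poly_monom)
  ultimately show ?thesis by (meson card_mono finite order.trans)
qed

text \<open>The rank of q1 is n, n - 2 or n - 4: the radical has dimension at most 4 and even dimension.\<close>
lemma qrank_part1:
  fixes a :: "'a::{field,finite}"
  assumes card: "card (UNIV :: 'a set) = 3 ^ n" and n: "n = 4 * k" and k: "k > 0" and a: "a \<noteq> 0"
  shows "qrank n (bquad n a (2 * (k + 1)) (-1) (2 * k)) \<in> {n, n - 2, n - 4}"
proof -
  let ?Q = "bquad n a (2 * (k + 1)) (-1) (2 * k)"
  have char: "CHAR('a) = 3" by (rule CHAR_eq_3[OF card])
  have card_R: "card (qrad ?Q) = 3 ^ dim3 (qrad ?Q)"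
    by (rule card_subspace3[OF char subspace3_qrad[OF char]])
  have "card (UNIV :: 'a set) - 1 = 4 * (20 * (\<Sum>i<k. 81 ^ i))"
    using card_minus_one_eq[where 'a='a, of k] card n by simp
  then obtain i :: 'a where ii: "i * i = -1" using sqrt_minus_one_exists by blast
  have "i * y \<in> qrad ?Q" if "y \<in> qrad ?Q" for y
    using ii that by (intro qrad_scale[where g = uminus] bquad_scale_sqrt_minus_one) auto
  hence "4 dvd card (qrad ?Q) - 1"
    by (intro four_dvd_card_minus_one[OF _ _ ii two_neq_0[OF char]]) (auto simp: qrad_def)
  hence "even (dim3 (qrad ?Q))"
    using card_R by (intro even_if_four_dvd_power_3) simp
  moreover have "(3::nat) ^ dim3 (qrad ?Q) \<le> 3 ^ 4"
    using card_qrad_part1_le[OF card n k a] card_R by simp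
  hence "dim3 (qrad ?Q) \<le> 4"
    by (rule power_le_imp_le_exp[rotated]) simp
  moreover have "\<forall>d::nat. even d \<longrightarrow> d \<le> 4 \<longrightarrow> d = 0 \<or> d = 2 \<or> d = 4" by presburger
  ultimately have "dim3 (qrad ?Q) \<in> {0, 2, 4}" by blast
  thus ?thesis unfolding qrank_def by auto
qed

text \<open>The key step for q2: (ay)^(81^m) + a y^(81^l) never vanishes for a, y nonzero, because raising
  to the odd power e = (|F|-1)/80 would give (ay)^e = -(ay)^e.\<close>
lemma twisted_sum_nonzero:
  fixes a y :: "'a::{field,finite}"
  assumes q: "card (UNIV :: 'a set) - 1 = 80 * e" and e: "odd e" and two: "(2::'a) \<noteq> 0"
    and a: "a \<noteq> 0" and y: "y \<noteq> 0"
  shows "(a * y) ^ (81 ^ m) + a * y ^ (81 ^ l) \<noteq> 0"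
proof
  assume "(a * y) ^ (81 ^ m) + a * y ^ (81 ^ l) = 0"
  hence eq: "(a * y) ^ (81 ^ m) = - (a * y ^ (81 ^ l))"
    by (simp add: eq_neg_iff_add_eq_0)
  have "(a * y) ^ e = ((a * y) ^ (81 ^ m)) ^ e"
    using unit_power_81_e[OF q, of "a * y" m] a y by simp
  also have "\<dots> = - (a ^ e * (y ^ (81 ^ l)) ^ e)"
    unfolding eq using e by (simp add: power_mult_distrib)
  also have "(y ^ (81 ^ l)) ^ e = y ^ e"
    by (rule unit_power_81_e[OF q y])
  finally have "(a * y) ^ e + (a * y) ^ e = 0"
    by (simp add: power_mult_distrib)
  hence "2 * (a * y) ^ e = 0" by (simp flip: mult_2)
  thus False using two a y by simp
qed

text \<open>The radical of q2 (A = a r, B = -s with s^9 = -s) is trivial: the two terms with exponent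
  3^(2k) cancel and the rest is a nonzero multiple of the twisted sum above.\<close>
lemma qrad_part2:
  fixes a r s :: "'a::{field,finite}"
  assumes card: "card (UNIV :: 'a set) = 3 ^ n" and n: "n = 4 * k" and k: "odd k"
    and a: "a \<noteq> 0" and r0: "r \<noteq> 0" and r81: "r ^ 81 = r" and s9: "s ^ 9 = - s"
  shows "qrad (bquad n (a * r) (2 * (k + 1)) (- s) (2 * k)) = {0}"
proof -
  obtain j where kj: "k = 2 * j + 1" using k oddE by blast
  have char: "CHAR('a) = 3" by (rule CHAR_eq_3[OF card])
  define e where "e = (\<Sum>i<k. (81::nat) ^ i)"
  have q: "card (UNIV :: 'a set) - 1 = 80 * e"
    unfolding e_def using card_minus_one_eq[where 'a='a, of k] card n by simp
  have odd_e: "odd e" unfolding e_def using k odd_geometric_81 by blast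
  have s9': "(- s) ^ 9 = s" using s9 by (simp add: power_minus_odd)
  have "s ^ 81 = (s ^ 9) ^ 9" by (simp flip: power_mult)
  hence s81: "s ^ 81 = s" using s9 s9' by simp
  have exps: "n - 2 * (k + 1) = 4 * j" "n - 2 * k = 2 * k" "(3::nat) ^ (4 * j) = 81 ^ j"
      "(3::nat) ^ (2 * (k + 1)) = 81 ^ (j + 1)" "(3::nat) ^ (2 * k) = 9 * 81 ^ j"
    using n kj by (simp_all add: power_mult power_add)
  have "y = 0" if y: "y \<in> qrad (bquad n (a * r) (2 * (k + 1)) (- s) (2 * k))" for y
  proof (rule ccontr)
    assume y0: "y \<noteq> 0"
    have "bquad_lin n (a * r) (2 * (k + 1)) (- s) (2 * k) y = 0"
      by (rule qrad_bquad_lin[OF card _ _ y]) (use n kj in simp_all)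
    moreover have "bquad_lin n (a * r) (2 * (k + 1)) (- s) (2 * k) y
        = r * ((a * y) ^ (81 ^ j) + a * y ^ (81 ^ (j + 1)))"
      unfolding bquad_lin_def exps
      using power_81_iterate[OF r81, of j] power_81_iterate[OF s81, of j] s9
      by (simp add: power_mult_distrib power_mult algebra_simps)
    ultimately have "r * ((a * y) ^ (81 ^ j) + a * y ^ (81 ^ (j + 1))) = 0" by simp
    hence "(a * y) ^ (81 ^ j) + a * y ^ (81 ^ (j + 1)) = 0"
      using r0 mult_eq_0_iff by blast
    thus False
      using twisted_sum_nonzero[OF q odd_e two_neq_0[OF char] a y0] by blast
  qed
  moreover have "0 \<in> qrad (bquad n (a * r) (2 * (k + 1)) (- s) (2 * k))"
    unfolding qrad_def by simp
  ultimately show ?thesis by blast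
qed

text \<open>For the second, Euler's
  criterion gives r^40 = -1, hence r^d = r^5 for the exponent d of the statement, and s = r^5
  satisfies s^9 = -s, so qrad_part2 applies.\<close>
theorem mainTheorem5:
  fixes k n :: nat and a r :: "'a::{field,finite}"
  assumes "odd k"
    and "n = 4 * k"
    and "card (UNIV :: 'a set) = 3 ^ n"
    and "a \<noteq> 0"
    and "r \<in> GF81"
    and "r \<noteq> 0"
    and "\<not> (\<exists>y\<in>GF81. y ^ 2 = r)"
  shows "qrank n (\<lambda>x. tr n (a * x ^ (3 ^ (2 * (k + 1)) + 1) - x ^ (3 ^ (2 * k) + 1)))
           \<in> {n, n - 2, n - 4}
       \<and> qrank n (\<lambda>x. tr n (a * r * x ^ (3 ^ (2 * (k + 1)) + 1)
                              - r ^ ((3 ^ (2 * k) + 1) ^ 2 div 20) * x ^ (3 ^ (2 * k) + 1))) = n"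
proof -
  have k: "k > 0" using \<open>odd k\<close> by (cases k) auto
  have r40: "r ^ 40 = -1"
    using nonsquare_power_40[of k r] assms by simp
  hence "r ^ 80 = 1" using power_mult[of r 40 2] by simp
  hence r_d: "r ^ ((3 ^ (2 * k) + 1) ^ 2 div 20) = r ^ 5"
    using power_mod_order[of r 80] exponent_mod_80[OF assms(1)] by metis
  have "(r ^ 5) ^ 9 = r ^ 40 * r ^ 5"
    by (simp flip: power_mult power_add)
  hence "(r ^ 5) ^ 9 = - (r ^ 5)"
    using r40 by simp
  hence "qrad (bquad n (a * r) (2 * (k + 1)) (- (r ^ 5)) (2 * k)) = {0}"
    using qrad_part2[OF assms(3,2,1,4,6)] assms(5) unfolding GF81_def by simp
  moreover have
    "(\<lambda>x. tr n (a * x ^ (3 ^ (2 * (k + 1)) + 1) - x ^ (3 ^ (2 * k) + 1)))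
       = bquad n a (2 * (k + 1)) (-1) (2 * k)"
    "(\<lambda>x. tr n (a * r * x ^ (3 ^ (2 * (k + 1)) + 1)
                - r ^ ((3 ^ (2 * k) + 1) ^ 2 div 20) * x ^ (3 ^ (2 * k) + 1)))
       = bquad n (a * r) (2 * (k + 1)) (- (r ^ 5)) (2 * k)"
    unfolding r_d by (simp_all add: fun_eq_iff bquad_def)
  ultimately show ?thesis
    using qrank_part1[OF assms(3,2) k assms(4)] by (simp add: qrank_def dim3_zero)
qed

end
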